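(* For all real $s,t\in(0,\infty)$, every integer $n\ge 2$ and every $\sigma\in(0,2]$, $$n\,t^{n+\sigma}-(n+\sigma)\,t^n s^{\sigma}+\sigma\, s^{n+\sigma}\ \ge\ \sigma\, s^{n+\sigma-2}(t-s)^2 .$$ *)

theory Defs
  imports Complex_Main
begin

end

theory Submission
  imports Defs "HOL-Analysis.Convex"
begin

text \<open>With \<open>p = a - 1 + \<sigma>\<close>, weighted AM-GM gives
  \<open>p t^(a-1) s^\<sigma> \<le> (a-1) t^p + \<sigma> s^p\<close> and \<open>p t s^(p-1) \<le> t^p + (p-1) s^p\<close>.
  Adding \<open>a + \<sigma>\<close> times the first to \<open>\<sigma>\<close> times the second, dividing by \<open>p\<close> and
  multiplying by \<open>t\<close> yields
  \<open>(a + \<sigma>) t^a s^\<sigma> + \<sigma> s^(a+\<sigma>-2) t^2 \<le> a t^(a+\<sigma>) + 2\<sigma> s^(a+\<sigma>-1) t\<close>,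
  which is the claim after expanding \<open>(t - s)^2\<close>.\<close>

lemma weighted_AM_GM_powr:
  fixes x y a b :: real
  assumes "x > 0" "y > 0" "a \<ge> 0" "b \<ge> 0"
  shows "(a + b) * (x powr a * y powr b) \<le> a * x powr (a + b) + b * y powr (a + b)"
proof (cases "a + b = 0")
  case True
  then show ?thesis using assms by simp
next
  case False
  define p where "p = a + b"
  have "p > 0" using False assms by (simp add: p_def)
  have "(x powr p) powr (a / p) * (y powr p) powr (b / p)
      \<le> a / p * x powr p + b / p * y powr p"
    using \<open>p > 0\<close> assms by (intro Youngs_inequality_0) (auto simp: p_def simp flip: add_divide_distrib)
  then have "x powr a * y powr b \<le> (a * x powr p + b * y powr p) / p"
    using \<open>p > 0\<close> by (simp add: powr_powr add_divide_distrib)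
  then show ?thesis
    using \<open>p > 0\<close> by (simp add: p_def field_simps)
qed

lemma powr_two_point_lower_bound:
  fixes a \<sigma> s t :: real
  assumes "s > 0" "t > 0" "a \<ge> 1" "\<sigma> > 0" "a + \<sigma> \<ge> 2"
  shows "a * t powr (a + \<sigma>) - (a + \<sigma>) * t powr a * s powr \<sigma> + \<sigma> * s powr (a + \<sigma>)
         \<ge> \<sigma> * s powr (a + \<sigma> - 2) * (t - s)^2"
proof -
  define p where "p = a - 1 + \<sigma>"
  define q where "q = a + \<sigma> - 2"
  have "p > 0" "q \<ge> 0" using assms by (simp_all add: p_def q_def)
  have "1 + q = p" by (simp add: p_def q_def)
  have amgm1: "p * (t powr (a - 1) * s powr \<sigma>) \<le> (a - 1) * t powr p + \<sigma> * s powr p"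
    using weighted_AM_GM_powr[of t s "a - 1" \<sigma>, folded p_def] assms by simp
  have amgm2: "p * (t * s powr q) \<le> t powr p + q * s powr p"
    using weighted_AM_GM_powr[of t s 1 q, unfolded \<open>1 + q = p\<close>] assms \<open>q \<ge> 0\<close> by simp
  have "p * ((a + \<sigma>) * (t powr (a - 1) * s powr \<sigma>) + \<sigma> * (t * s powr q))
      = (a + \<sigma>) * (p * (t powr (a - 1) * s powr \<sigma>)) + \<sigma> * (p * (t * s powr q))"
    by (simp add: algebra_simps)
  also have "\<dots> \<le> (a + \<sigma>) * ((a - 1) * t powr p + \<sigma> * s powr p) + \<sigma> * (t powr p + q * s powr p)"
    using amgm1 amgm2 assms by (intro add_mono mult_left_mono) auto
  also have "\<dots> = p * (a * t powr p + 2 * \<sigma> * s powr p)"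
    by (simp add: p_def q_def algebra_simps)
  finally have combined:
    "(a + \<sigma>) * (t powr (a - 1) * s powr \<sigma>) + \<sigma> * (t * s powr q) \<le> a * t powr p + 2 * \<sigma> * s powr p"
    using \<open>p > 0\<close> by simp
  have "t powr a = t powr (a - 1) * t" "t powr (a + \<sigma>) = t powr p * t"
    using powr_mult_base[of t "a - 1"] powr_mult_base[of t p] assms
    by (simp_all add: p_def mult.commute)
  moreover have "s powr p = s powr q * s" "s powr (a + \<sigma>) = s powr q * s * s"
    using powr_mult_base[of s q] powr_mult_base[of s p] \<open>1 + q = p\<close> assms
    by (simp_all add: p_def mult.commute)
  ultimately show ?thesis
    using mult_right_mono[OF combined, of t] assms
    by (simp add: q_def power2_eq_square algebra_simps)
qed

theorem lemma2p2:
  fixes s t \<sigma> :: real and n :: nat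
  assumes "s > 0" and "t > 0" and "n \<ge> 2" and "0 < \<sigma>" and "\<sigma> \<le> 2"
  shows "real n * t powr (real n + \<sigma>) - (real n + \<sigma>) * t powr (real n) * s powr \<sigma>
           + \<sigma> * s powr (real n + \<sigma>)
         \<ge> \<sigma> * s powr (real n + \<sigma> - 2) * (t - s)^2"
  using powr_two_point_lower_bound[of s t "real n" \<sigma>] assms by simp

end
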